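(* Let $\mathbb{H}$ denote the ring of real quaternions with its usual norm $|\cdot|$, and let $S$ be a dense subsemigroup of $(\mathbb{H},+)$ such that $S\cap\mathbb{H}$ is a subsemigroup of $(\mathbb{H}\setminus\{0\},\cdot)$. Let $B_d(1)=\{x\in\mathbb{H}:|x|<1\}$. (1) If $A\subseteq S$ is an IP set near $0$, then $sA=\{sa:a\in A\}$ is an IP set near $0$ for every $s\in S\cap B_d(1)\setminus\{0\}$. (2) If $A\subseteq S$ is an IP$^*$ set near $0$ in $(S,+)$, then both $s^{-1}A=\{t\in S: st\in A\}$ and $As^{-1}=\{t\in S: ts\in A\}$ are IP$^*$ sets near $0$ for every $s\in S\cap B_d(1)\setminus\{0\}$.
   Context: For a sequence $\langle x_n\rangle_{n=1}^\infty$, $FS(\langle x_n\rangle_{n=1}^\infty)=\{\sum_{n\in F}x_n: F \text{ a finite nonempty subset of }\mathbb{N}\}$. A subset $A$ of $S$ is an IP set near $0$ if there exists a sequence $\langle x_n\rangle_{n=1}^\infty$ in $S$ such that $\sum_{n=1}^\infty x_n$ converges and $FS(\langle x_n\rangle_{n=1}^\infty)\subseteq A$. A subset $D$ of $S$ is an IP$^*$ set near $0$ if for every subset $C$ of $S$ which is an IP set near $0$, $C\cap D$ is an IP set near $0$. *)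

theory Defs
  imports "HOL-Analysis.Analysis"
begin

text \<open>Real quaternions, represented as real^4 (components 1,2,3,4 = real part, i, j, k);
  the Euclidean norm of real^4 is the usual quaternion norm, addition is vector addition,
  and the Hamilton product is defined explicitly.\<close>

type_synonym quat = "real^4"

definition qmult :: "quat \<Rightarrow> quat \<Rightarrow> quat" (infixl "\<odot>" 70) where
  "p \<odot> q = vector
     [p$1*q$1 - p$2*q$2 - p$3*q$3 - p$4*q$4,
      p$1*q$2 + p$2*q$1 + p$3*q$4 - p$4*q$3,
      p$1*q$3 - p$2*q$4 + p$3*q$1 + p$4*q$2,
      p$1*q$4 + p$2*q$3 - p$3*q$2 + p$4*q$1]"

definition FS :: "(nat \<Rightarrow> 'a::comm_monoid_add) \<Rightarrow> 'a set" where
  "FS x = {sum x F | F. finite F \<and> F \<noteq> {}}"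

definition IP_near0 :: "'a::{comm_monoid_add, topological_space} set \<Rightarrow> 'a set \<Rightarrow> bool" where
  "IP_near0 S A \<longleftrightarrow> (\<exists>x. (\<forall>n. x n \<in> S) \<and> summable x \<and> FS x \<subseteq> A)"

definition IPstar_near0 :: "'a::{comm_monoid_add, topological_space} set \<Rightarrow> 'a set \<Rightarrow> bool" where
  "IPstar_near0 S D \<longleftrightarrow> (\<forall>C. C \<subseteq> S \<longrightarrow> IP_near0 S C \<longrightarrow> IP_near0 S (C \<inter> D))"

end

theory Submission
  imports Defs
begin

text \<open>Left and right multiplication by a fixed quaternion are injective linear maps of
  \<open>real^4\<close> that map \<open>S\<close> into itself. A bounded linear map carries convergent series to
  convergent series and finite sums to finite sums, so it maps IP sets near 0 to IP sets
  near 0; applying this to a linear left inverse shows that preimages of IP* sets near 0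
  under such a map are again IP* sets near 0.\<close>

lemma FS_linear_image: "linear f \<Longrightarrow> FS (f \<circ> x) = f ` FS x"
  unfolding FS_def by (auto simp: linear_sum[of f, symmetric] comp_def)

lemma term_in_FS: "x n \<in> FS x"
  unfolding FS_def by (rule CollectI, rule exI[of _ "{n}"]) simp

lemma IP_near0_Int_ambient: "IP_near0 S A \<Longrightarrow> IP_near0 (S \<inter> A) A"
  unfolding IP_near0_def using term_in_FS by blast

lemma IP_near0_linear_image:
  fixes f :: "'a::real_normed_vector \<Rightarrow> 'b::real_normed_vector"
  assumes f: "bounded_linear f" and fS: "f ` S \<subseteq> T"
    and A: "IP_near0 S A"
  shows "IP_near0 T (f ` A)"
proof -
  obtain x where x: "\<forall>n. x n \<in> S" "summable x" "FS x \<subseteq> A"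
    using A unfolding IP_near0_def by blast
  have "FS (f \<circ> x) \<subseteq> f ` A"
    using FS_linear_image[OF bounded_linear.linear[OF f]] x(3) by auto
  moreover have "summable (f \<circ> x)"
    using bounded_linear.summable[OF f x(2)] by (simp add: comp_def)
  moreover have "\<forall>n. (f \<circ> x) n \<in> T" using x(1) fS by auto
  ultimately show ?thesis unfolding IP_near0_def by blast
qed

lemma IPstar_near0_linear_vimage:
  fixes f :: "'a::euclidean_space \<Rightarrow> 'a"
  assumes f: "linear f" "inj f" and fS: "f ` S \<subseteq> S"
    and D: "IPstar_near0 S D"
  shows "IPstar_near0 S {t \<in> S. f t \<in> D}"
  unfolding IPstar_near0_def
proof (intro allI impI)
  obtain g where g: "linear g" "g \<circ> f = id"
    using linear_injective_left_inverse[OF f] by blast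
  fix C assume CS: "C \<subseteq> S" and C: "IP_near0 S C"
  have "IP_near0 S (f ` C)"
    using IP_near0_linear_image[OF linear_conv_bounded_linear[THEN iffD1, OF f(1)] fS C] .
  moreover have "f ` C \<subseteq> S" using CS fS by blast
  ultimately have "IP_near0 S (f ` C \<inter> D)"
    using D unfolding IPstar_near0_def by blast
  then have fCD: "IP_near0 (S \<inter> (f ` C \<inter> D)) (f ` C \<inter> D)"
    by (rule IP_near0_Int_ambient)
  have "f ` C \<inter> D = f ` (C \<inter> {t \<in> S. f t \<in> D})"
    using CS by auto
  then have g_fCD: "g ` (f ` C \<inter> D) = C \<inter> {t \<in> S. f t \<in> D}"
    by (simp add: image_comp g(2))
  then have "g ` (S \<inter> (f ` C \<inter> D)) \<subseteq> S"
    using CS by blast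
  from IP_near0_linear_image[OF linear_conv_bounded_linear[THEN iffD1, OF g(1)] this fCD]
  show "IP_near0 S (C \<inter> {t \<in> S. f t \<in> D})"
    by (simp only: g_fCD)
qed

lemma vector_4_nth [simp]:
  "(vector [a, b, c, d] :: real^4) $ 1 = a"
  "(vector [a, b, c, d] :: real^4) $ 2 = b"
  "(vector [a, b, c, d] :: real^4) $ 3 = c"
  "(vector [a, b, c, d] :: real^4) $ 4 = d"
  unfolding vector_def by simp_all

lemma linear_qmult_left: "linear (\<lambda>q. s \<odot> q)"
  by (rule linearI) (simp_all add: vec_eq_iff forall_4 qmult_def algebra_simps)

lemma linear_qmult_right: "linear (\<lambda>q. q \<odot> s)"
  by (rule linearI) (simp_all add: vec_eq_iff forall_4 qmult_def algebra_simps)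

definition qconj :: "quat \<Rightarrow> quat" where
  "qconj s = vector [s$1, - s$2, - s$3, - s$4]"

lemma inner_self_real4: "(s::real^4) \<bullet> s = s$1^2 + s$2^2 + s$3^2 + s$4^2"
  by (simp add: inner_vec_def sum_4 power2_eq_square)

lemma qconj_qmult_cancel_left: "qconj s \<odot> (s \<odot> t) = (s \<bullet> s) *\<^sub>R t"
  by (simp add: inner_self_real4 vec_eq_iff forall_4 qmult_def qconj_def
      algebra_simps power2_eq_square)

lemma qmult_qconj_cancel_right: "(t \<odot> s) \<odot> qconj s = (s \<bullet> s) *\<^sub>R t"
  by (simp add: inner_self_real4 vec_eq_iff forall_4 qmult_def qconj_def
      algebra_simps power2_eq_square)

lemma inj_qmult_left: "s \<noteq> 0 \<Longrightarrow> inj (\<lambda>q. s \<odot> q)"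
  by (rule injI) (metis qconj_qmult_cancel_left inner_eq_zero_iff scaleR_cancel_left)

lemma inj_qmult_right: "s \<noteq> 0 \<Longrightarrow> inj (\<lambda>q. q \<odot> s)"
  by (rule injI) (metis qmult_qconj_cancel_right inner_eq_zero_iff scaleR_cancel_left)

theorem lemma2p3:
  fixes S :: "quat set"
  assumes dense: "closure S = UNIV"
    and add_closed: "\<And>a b. a \<in> S \<Longrightarrow> b \<in> S \<Longrightarrow> a + b \<in> S"
    and nonzero: "0 \<notin> S"
    and mult_closed: "\<And>a b. a \<in> S \<Longrightarrow> b \<in> S \<Longrightarrow> a \<odot> b \<in> S"
  shows "(\<forall>A s. A \<subseteq> S \<and> IP_near0 S A \<and> s \<in> S \<and> norm s < 1 \<and> s \<noteq> 0
             \<longrightarrow> IP_near0 S ((\<lambda>a. s \<odot> a) ` A))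
       \<and> (\<forall>A s. A \<subseteq> S \<and> IPstar_near0 S A \<and> s \<in> S \<and> norm s < 1 \<and> s \<noteq> 0
             \<longrightarrow> IPstar_near0 S {t \<in> S. s \<odot> t \<in> A} \<and> IPstar_near0 S {t \<in> S. t \<odot> s \<in> A})"
proof (intro conjI allI impI)
  fix A s assume h: "A \<subseteq> S \<and> IP_near0 S A \<and> s \<in> S \<and> norm s < 1 \<and> s \<noteq> 0"
  show "IP_near0 S ((\<lambda>a. s \<odot> a) ` A)"
    using IP_near0_linear_image[OF linear_qmult_left[THEN linear_conv_bounded_linear[THEN iffD1]]]
      h mult_closed by blast
next
  fix A s assume h: "A \<subseteq> S \<and> IPstar_near0 S A \<and> s \<in> S \<and> norm s < 1 \<and> s \<noteq> 0"
  show "IPstar_near0 S {t \<in> S. s \<odot> t \<in> A}"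
    by (rule IPstar_near0_linear_vimage[OF linear_qmult_left inj_qmult_left])
       (use h mult_closed in auto)
  show "IPstar_near0 S {t \<in> S. t \<odot> s \<in> A}"
    by (rule IPstar_near0_linear_vimage[OF linear_qmult_right inj_qmult_right])
       (use h mult_closed in auto)
qed

end
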